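(* For every positive integer $n$ and every $k\le n$ there exists an instance of the myopic best-response dynamics described below (a graph with nonnegative embedding weights, features, a linear threshold classifier, and a scaled 2-norm cost) in which $n-k$ users move at round $k$.
   Context: Users $i$ have features $x_i\in\mathbb{R}^\ell$; embeddings $\phi(x_i;x_{-i})=\widetilde{w}_{ii}x_i+\sum_{j\neq i}\widetilde{w}_{ji}x_j$ with $\widetilde{w}_{ji}\ge0$. Classifier: $h_{\theta,b}(x_i;x_{-i})=\mathrm{sign}(\theta^\top\phi(x_i;x_{-i})+b)$, $\mathrm{sign}(0)=+1$. Cost $c_\beta(x,x')=\beta\|x-x'\|_2$ for some $\beta>0$. Dynamics: $x_i^{(0)}=x_i$; at each round $t\ge1$ all users update concurrently; user $i$ changes her features only if she is currently classified $-1$ and some $x'$ with $h(x';x^{(t-1)}_{-i})=+1$ has $c_\beta(x_i^{(t-1)},x')\le2$, in which case she moves to the minimum-cost such point (embedding exactly on the decision boundary); otherwise she stays. User $i$ "moves at round $t$" if $x_i^{(t)}\neq x_i^{(t-1)}$. *)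

theory Defs
  imports Complex_Main
begin

text \<open>Feature vectors in R^l are represented as functions nat => real that vanish
  at coordinates >= l.  Users are indexed by 0..<n.  The weight w j i is the
  embedding weight of user j in the embedding of user i (tilde w_{ji}).\<close>

definition feat_space :: "nat \<Rightarrow> (nat \<Rightarrow> real) set" where
  "feat_space l = {v. \<forall>c\<ge>l. v c = 0}"

definition l2dist :: "nat \<Rightarrow> (nat \<Rightarrow> real) \<Rightarrow> (nat \<Rightarrow> real) \<Rightarrow> real" where
  "l2dist l v u = sqrt (\<Sum>c<l. (v c - u c)^2)"

definition cost :: "real \<Rightarrow> nat \<Rightarrow> (nat \<Rightarrow> real) \<Rightarrow> (nat \<Rightarrow> real) \<Rightarrow> real" where
  "cost \<beta> l v u = \<beta> * l2dist l v u"

definition embed :: "nat \<Rightarrow> (nat \<Rightarrow> nat \<Rightarrow> real) \<Rightarrow> (nat \<Rightarrow> nat \<Rightarrow> real) \<Rightarrow> nat \<Rightarrow> (nat \<Rightarrow> real)" where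
  "embed n w X i = (\<lambda>c. \<Sum>j<n. w j i * X j c)"

definition score :: "nat \<Rightarrow> nat \<Rightarrow> (nat \<Rightarrow> nat \<Rightarrow> real) \<Rightarrow> (nat \<Rightarrow> real) \<Rightarrow> real
    \<Rightarrow> (nat \<Rightarrow> nat \<Rightarrow> real) \<Rightarrow> nat \<Rightarrow> real" where
  "score n l w \<theta> b X i = (\<Sum>c<l. \<theta> c * embed n w X i c) + b"

text \<open>Classifier with sign(0) = +1: positive iff score >= 0.\<close>
definition positive :: "nat \<Rightarrow> nat \<Rightarrow> (nat \<Rightarrow> nat \<Rightarrow> real) \<Rightarrow> (nat \<Rightarrow> real) \<Rightarrow> real
    \<Rightarrow> (nat \<Rightarrow> nat \<Rightarrow> real) \<Rightarrow> nat \<Rightarrow> bool" where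
  "positive n l w \<theta> b X i \<longleftrightarrow> score n l w \<theta> b X i \<ge> 0"

definition best_response :: "nat \<Rightarrow> nat \<Rightarrow> (nat \<Rightarrow> nat \<Rightarrow> real) \<Rightarrow> (nat \<Rightarrow> real) \<Rightarrow> real \<Rightarrow> real
    \<Rightarrow> (nat \<Rightarrow> nat \<Rightarrow> real) \<Rightarrow> nat \<Rightarrow> (nat \<Rightarrow> real)" where
  "best_response n l w \<theta> b \<beta> X i =
     (if \<not> positive n l w \<theta> b X i \<and>
         (\<exists>x'\<in>feat_space l. positive n l w \<theta> b (X(i := x')) i \<and> cost \<beta> l (X i) x' \<le> 2)
      then (THE x'. x' \<in> feat_space l \<and> positive n l w \<theta> b (X(i := x')) i \<and>
              (\<forall>y\<in>feat_space l. positive n l w \<theta> b (X(i := y)) i \<longrightarrow>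
                  cost \<beta> l (X i) x' \<le> cost \<beta> l (X i) y))
      else X i)"

primrec dyn :: "nat \<Rightarrow> nat \<Rightarrow> (nat \<Rightarrow> nat \<Rightarrow> real) \<Rightarrow> (nat \<Rightarrow> real) \<Rightarrow> real \<Rightarrow> real
    \<Rightarrow> (nat \<Rightarrow> nat \<Rightarrow> real) \<Rightarrow> nat \<Rightarrow> (nat \<Rightarrow> nat \<Rightarrow> real)" where
  "dyn n l w \<theta> b \<beta> x0 0 = x0"
| "dyn n l w \<theta> b \<beta> x0 (Suc t) =
     (\<lambda>i. if i < n then best_response n l w \<theta> b \<beta> (dyn n l w \<theta> b \<beta> x0 t) i
           else dyn n l w \<theta> b \<beta> x0 t i)"

definition movers :: "nat \<Rightarrow> nat \<Rightarrow> (nat \<Rightarrow> nat \<Rightarrow> real) \<Rightarrow> (nat \<Rightarrow> real) \<Rightarrow> real \<Rightarrow> real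
    \<Rightarrow> (nat \<Rightarrow> nat \<Rightarrow> real) \<Rightarrow> nat \<Rightarrow> nat set" where
  "movers n l w \<theta> b \<beta> x0 t =
     {i. i < n \<and> dyn n l w \<theta> b \<beta> x0 t i \<noteq> dyn n l w \<theta> b \<beta> x0 (t - 1) i}"

end

theory Submission
  imports Defs
begin

(* The instance is one-dimensional with theta = e_0, b = 0 and beta = 2, so a rejected user
   can move her feature by at most 1.  Users 0, ..., n-2 start at -1; user n-1 starts at 0,
   is accepted and never moves.
   Besides herself, user i (i < n-1) sees only user delay k i - 1 (nobody if delay k i = 0),
   where delay k i = min i (k-1).
   While that user is still at -1 the score of i is -2 and out of reach; once it has moved to 0
   the score of i is -1 and i moves to 0 in the next round.  Hence user i moves exactly at
   round delay k i + 1: users 0, ..., k-1 form a path moving one per round, and the n - k users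
   k-1, ..., n-2 all listen to user k-2 and move together at round k. *)

lemma best_response_eqI:
  assumes "\<not> positive n l w \<theta> b X i"
    and "p \<in> feat_space l" "positive n l w \<theta> b (X(i := p)) i" "cost \<beta> l (X i) p \<le> 2"
    and minimal: "\<And>y. y \<in> feat_space l \<Longrightarrow> positive n l w \<theta> b (X(i := y)) i \<Longrightarrow>
                   cost \<beta> l (X i) p \<le> cost \<beta> l (X i) y"
    and unique: "\<And>y. y \<in> feat_space l \<Longrightarrow> positive n l w \<theta> b (X(i := y)) i \<Longrightarrow>
                   cost \<beta> l (X i) y \<le> cost \<beta> l (X i) p \<Longrightarrow> y = p"
  shows "best_response n l w \<theta> b \<beta> X i = p"
proof -
  have "(THE x'. x' \<in> feat_space l \<and> positive n l w \<theta> b (X(i := x')) i \<and>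
           (\<forall>y\<in>feat_space l. positive n l w \<theta> b (X(i := y)) i \<longrightarrow>
              cost \<beta> l (X i) x' \<le> cost \<beta> l (X i) y)) = p"
    by (rule the_equality) (use assms in \<open>auto intro: order.antisym\<close>)
  then show ?thesis
    using assms(1-4) unfolding best_response_def by auto
qed

lemma best_response_eq_self:
  assumes "positive n l w \<theta> b X i \<or>
    (\<forall>y\<in>feat_space l. positive n l w \<theta> b (X(i := y)) i \<longrightarrow> cost \<beta> l (X i) y > 2)"
  shows "best_response n l w \<theta> b \<beta> X i = X i"
  using assms unfolding best_response_def by force

definition peer_signal :: "nat \<Rightarrow> (nat \<Rightarrow> nat \<Rightarrow> real) \<Rightarrow> (nat \<Rightarrow> nat \<Rightarrow> real) \<Rightarrow> nat \<Rightarrow> real" where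
  "peer_signal n w X i = (\<Sum>j\<in>{..<n} - {i}. w j i * X j 0)"

lemma cost_1d: "cost \<beta> (Suc 0) x y = \<beta> * \<bar>x 0 - y 0\<bar>"
  by (simp add: cost_def l2dist_def)

lemma feat_space_1d: "y \<in> feat_space (Suc 0) \<longleftrightarrow> y = (\<lambda>c. if c = 0 then y 0 else 0)"
  by (auto simp: feat_space_def fun_eq_iff)

lemma positive_fun_upd_1d:
  assumes "i < n" "w i i = 1" "\<theta> 0 = 1"
  shows "positive n (Suc 0) w \<theta> b (X(i := x)) i \<longleftrightarrow> x 0 + peer_signal n w X i + b \<ge> 0"
proof -
  have "(\<Sum>j<n. w j i * (X(i := x)) j 0) = w i i * x 0 + (\<Sum>j\<in>{..<n} - {i}. w j i * X j 0)"
    using \<open>i < n\<close> by (auto simp: sum.remove[of _ i] intro!: sum.cong)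
  then show ?thesis
    using assms by (simp add: positive_def score_def embed_def peer_signal_def)
qed

lemma best_response_1d:
  fixes X :: "nat \<Rightarrow> nat \<Rightarrow> real" and b :: real
  assumes "i < n" "w i i = 1" "\<theta> 0 = 1" "\<beta> > 0"
  defines "r \<equiv> peer_signal n w X i + b"
  shows "best_response n (Suc 0) w \<theta> b \<beta> X i =
    (if X i 0 + r < 0 \<and> \<beta> * (- r - X i 0) \<le> 2 then (\<lambda>c. if c = 0 then - r else 0) else X i)"
proof -
  let ?p = "\<lambda>c. if c = 0 then - r else 0"
  have pos: "positive n (Suc 0) w \<theta> b (X(i := y)) i \<longleftrightarrow> y 0 + r \<ge> 0" for y
    using positive_fun_upd_1d[of i n w \<theta> b X y, OF assms(1-3)] by (simp add: r_def add.assoc)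
  have self: "positive n (Suc 0) w \<theta> b X i \<longleftrightarrow> X i 0 + r \<ge> 0"
    using pos[of "X i"] by simp
  have far: "\<beta> * (- r - X i 0) \<le> cost \<beta> (Suc 0) (X i) y"
    if "positive n (Suc 0) w \<theta> b (X(i := y)) i" for y
    using that \<open>\<beta> > 0\<close> by (simp add: pos cost_1d mult_left_mono)
  have cost_p: "cost \<beta> (Suc 0) (X i) ?p = \<beta> * (- r - X i 0)" if "X i 0 + r < 0"
    using that by (simp add: cost_1d)
  have "best_response n (Suc 0) w \<theta> b \<beta> X i = ?p"
    if "X i 0 + r < 0" "\<beta> * (- r - X i 0) \<le> 2"
  proof (rule best_response_eqI)
    fix y
    assume "y \<in> feat_space (Suc 0)" "positive n (Suc 0) w \<theta> b (X(i := y)) i"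
      "cost \<beta> (Suc 0) (X i) y \<le> cost \<beta> (Suc 0) (X i) ?p"
    then have "y 0 = - r"
      using that \<open>\<beta> > 0\<close> by (simp add: pos cost_1d)
    with \<open>y \<in> feat_space (Suc 0)\<close> show "y = ?p"
      by (metis feat_space_1d)
  qed (use that far cost_p in \<open>auto simp: pos self feat_space_def\<close>)
  moreover have "best_response n (Suc 0) w \<theta> b \<beta> X i = X i"
    if "\<not> (X i 0 + r < 0 \<and> \<beta> * (- r - X i 0) \<le> 2)"
    using that far by (force simp: self intro: best_response_eq_self)
  ultimately show ?thesis
    by auto
qed

definition delay :: "nat \<Rightarrow> nat \<Rightarrow> nat" where
  "delay k i = min i (k - 1)"

(* The guard 0 < delay k i matters: with truncated subtraction, delay k i - 1 would otherwise
   make user 0 a peer of every user with delay 0. *)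
definition relay_weight :: "nat \<Rightarrow> nat \<Rightarrow> nat \<Rightarrow> nat \<Rightarrow> real" where
  "relay_weight n k j i =
    (if j = i \<or> (i < n - 1 \<and> 0 < delay k i \<and> j = delay k i - 1) then 1 else 0)"

definition relay_state :: "nat \<Rightarrow> nat \<Rightarrow> nat \<Rightarrow> nat \<Rightarrow> nat \<Rightarrow> real" where
  "relay_state n k t i c = (if c = 0 \<and> i < n - 1 \<and> t \<le> delay k i then -1 else 0)"

definition coord0 :: "nat \<Rightarrow> real" where
  "coord0 c = (if c = 0 then 1 else 0)"

lemma peer_signal_relay_state:
  assumes "i < n"
  shows "peer_signal n (relay_weight n k) (relay_state n k t) i =
    (if i < n - 1 \<and> t < delay k i then -1 else 0)"
proof -
  let ?d = "delay k i"
  have "peer_signal n (relay_weight n k) (relay_state n k t) i =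
    (\<Sum>j\<in>{..<n} - {i}. if j = ?d - 1 then
        (if i < n - 1 \<and> 0 < ?d then relay_state n k t j 0 else 0) else 0)"
    unfolding peer_signal_def by (rule sum.cong) (auto simp: relay_weight_def)
  also have "\<dots> = (if i < n - 1 \<and> 0 < ?d then relay_state n k t (?d - 1) 0 else 0)"
    using assms by (auto simp: delay_def)
  also have "\<dots> = (if i < n - 1 \<and> t < ?d then -1 else 0)"
    by (auto simp: relay_state_def delay_def)
  finally show ?thesis .
qed

lemma relay_best_response:
  assumes "i < n"
  shows "best_response n (Suc 0) (relay_weight n k) coord0 0 2 (relay_state n k t) i =
    relay_state n k (Suc t) i"
  using assms
  by (auto simp: best_response_1d relay_weight_def coord0_def peer_signal_relay_state
      relay_state_def fun_eq_iff)

lemma dyn_relay: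
  "dyn n (Suc 0) (relay_weight n k) coord0 0 2 (relay_state n k 0) t = relay_state n k t"
proof (induction t)
  case (Suc t)
  have "relay_state n k (Suc t) i = relay_state n k t i" if "\<not> i < n" for i
    using that by (auto simp: relay_state_def fun_eq_iff)
  then show ?case
    by (auto simp: Suc.IH relay_best_response)
qed simp

lemma movers_relay:
  "movers n (Suc 0) (relay_weight n k) coord0 0 2 (relay_state n k 0) (Suc t) =
    {i. i < n - 1 \<and> delay k i = t}"
  unfolding movers_def dyn_relay by (auto simp: relay_state_def fun_eq_iff)

theorem proposition4:
  fixes n k :: nat
  assumes "n \<ge> 1" and "1 \<le> k" and "k \<le> n"
  shows "\<exists>(l::nat) (w::nat \<Rightarrow> nat \<Rightarrow> real) (x0::nat \<Rightarrow> nat \<Rightarrow> real) (\<theta>::nat \<Rightarrow> real) (b::real) (\<beta>::real).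
           l \<ge> 1 \<and> \<beta> > 0 \<and>
           (\<forall>i<n. \<forall>j<n. w j i \<ge> 0) \<and>
           (\<forall>i<n. x0 i \<in> feat_space l) \<and>
           (\<forall>i\<ge>n. \<forall>c. x0 i c = 0) \<and>
           (\<forall>c\<ge>l. \<theta> c = 0) \<and>
           card (movers n l w \<theta> b \<beta> x0 k) = n - k"
proof -
  have "{i. i < n - 1 \<and> delay k i = k - 1} = {k - 1..<n - 1}"
    by (auto simp: delay_def)
  then have card_movers:
    "card (movers n (Suc 0) (relay_weight n k) coord0 0 2 (relay_state n k 0) k) = n - k"
    using movers_relay[of n k "k - 1"] assms by simp
  show ?thesis
    by (rule exI[of _ "Suc 0"], rule exI[of _ "relay_weight n k"], rule exI[of _ "relay_state n k 0"],
        rule exI[of _ coord0], rule exI[of _ "0::real"], rule exI[of _ "2::real"], insert card_movers)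
      (auto simp: relay_weight_def relay_state_def coord0_def feat_space_def)
qed

end
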